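(* Let $n\ge2$, let $\mathcal{S}=\{\boldsymbol{\sigma}(\mathbf{t}):\mathbf{t}\in D\}$ be a rationally parameterisable hypersurface in $\mathbb{R}^n$, and let $O$ be an open subset of $D\setminus\sigma_1^{-1}(0)$ in $\mathbb{R}^{n-1}$ that satisfies the hyperplane condition and the inner point condition. If $F$ is an E-function (of some degree $d$) with $F(\mathbf{x})=0$ for all $\mathbf{x}\in\boldsymbol{\sigma}(O)$, then $F$ is the zero function.
   Context: An rp-hypersurface is $\mathcal{S}=\{\boldsymbol{\sigma}(\mathbf{t}):\mathbf{t}\in D\}$ with $\boldsymbol{\sigma}=(\sigma_1,\dots,\sigma_n)^T$ having rational functions of $\mathbf{t}\in\mathbb{R}^{n-1}$ as components and $D\subseteq\mathbb{R}^{n-1}$ a set where they are defined. $\hat{\boldsymbol{\sigma}}(\mathbf{t})=(\sigma_2(\mathbf{t})/\sigma_1(\mathbf{t}),\dots,\sigma_n(\mathbf{t})/\sigma_1(\mathbf{t}))^T$ for $\mathbf{t}\in D\setminus\sigma_1^{-1}(0)$. Hyperplane condition: $\boldsymbol{\sigma}(O)$ is not contained in any (affine) hyperplane of $\mathbb{R}^n$. Inner point condition: there is $\mathbf{t}\in O$ such that $\hat{\boldsymbol{\sigma}}(\mathbf{t})$ is an interior point of $\hat{\boldsymbol{\sigma}}(O)$ in $\mathbb{R}^{n-1}$. An E-function of degree $d$ ($d\in\mathbb{Z}$) is a function of the form $F(\mathbf{x})=\sum_{k=1}^m P_k(\mathbf{x})e^{-i\,\mathbf{v}_k\cdot\mathbf{x}}$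 (on $\mathbb{C}^n$, where defined), with distinct points $\mathbf{v}_1,\dots,\mathbf{v}_m\in\mathbb{R}^n$ and coefficients $P_k$ that are complex rational functions of $\mathbf{x}$ homogeneous of degree $d$ (i.e. $P_k(\lambda\mathbf{x})=\lambda^dP_k(\mathbf{x})$ for all real $\lambda\neq0$). *)

theory Defs
  imports "HOL-Analysis.Analysis"
begin

text \<open>The parameter space R^(n-1) is real^'m (so n-1 = CARD('m) \<ge> 1,
i.e. n \<ge> 2), and R^n is real^('m option): coordinate None is the first coordinate
(sigma_1), coordinate Some i are the remaining ones. C^n is complex^('m option).\<close>

definition polyfun :: "('a::comm_ring_1 ^ 'i::finite \<Rightarrow> 'a) \<Rightarrow> bool" where
  "polyfun f \<longleftrightarrow> (\<exists>(E :: ('i \<Rightarrow> nat) set) c. finite E \<and>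
      (\<forall>x. f x = (\<Sum>\<alpha>\<in>E. c \<alpha> * (\<Prod>i\<in>UNIV. (x $ i) ^ (\<alpha> i)))))"

definition rp_param :: "(real^'m::finite \<Rightarrow> real^('m option)) \<Rightarrow> (real^'m) set \<Rightarrow> bool" where
  "rp_param \<sigma> D \<longleftrightarrow> (\<forall>j. \<exists>p q. polyfun p \<and> polyfun q \<and>
      (\<forall>t\<in>D. q t \<noteq> 0 \<and> \<sigma> t $ j = p t / q t))"

definition sigma_hat :: "(real^'m::finite \<Rightarrow> real^('m option)) \<Rightarrow> real^'m \<Rightarrow> real^'m" where
  "sigma_hat \<sigma> t = (\<chi> i. \<sigma> t $ Some i / \<sigma> t $ None)"

definition hyperplane_condition :: "(real^'m::finite \<Rightarrow> real^('m option)) \<Rightarrow> (real^'m) set \<Rightarrow> bool" where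
  "hyperplane_condition \<sigma> U \<longleftrightarrow>
     \<not> (\<exists>a b. a \<noteq> 0 \<and> \<sigma> ` U \<subseteq> {y. inner a y = b})"

definition inner_point_condition :: "(real^'m::finite \<Rightarrow> real^('m option)) \<Rightarrow> (real^'m) set \<Rightarrow> bool" where
  "inner_point_condition \<sigma> U \<longleftrightarrow> (\<exists>t\<in>U. sigma_hat \<sigma> t \<in> interior (sigma_hat \<sigma> ` U))"

text \<open>Bilinear (not Hermitian) pairing v . x of a real vector with a complex vector.\<close>
definition rdot :: "real^'n::finite \<Rightarrow> complex^'n \<Rightarrow> complex" where
  "rdot v x = (\<Sum>j\<in>UNIV. complex_of_real (v $ j) * x $ j)"

definition cembed :: "real^'n::finite \<Rightarrow> complex^'n" where
  "cembed y = (\<chi> j. complex_of_real (y $ j))"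

definition E_fun :: "nat \<Rightarrow> (nat \<Rightarrow> real^'n::finite) \<Rightarrow> (nat \<Rightarrow> complex^'n \<Rightarrow> complex)
    \<Rightarrow> (nat \<Rightarrow> complex^'n \<Rightarrow> complex) \<Rightarrow> complex^'n \<Rightarrow> complex" where
  "E_fun m v Pn Pd x = (\<Sum>k<m. (Pn k x / Pd k x) * exp (- \<i> * rdot (v k) x))"

definition E_defined :: "nat \<Rightarrow> (nat \<Rightarrow> complex^'n::finite \<Rightarrow> complex) \<Rightarrow> complex^'n \<Rightarrow> bool" where
  "E_defined m Pd x \<longleftrightarrow> (\<forall>k<m. Pd k x \<noteq> 0)"

definition is_E_function :: "int \<Rightarrow> nat \<Rightarrow> (nat \<Rightarrow> real^'n::finite) \<Rightarrow> (nat \<Rightarrow> complex^'n \<Rightarrow> complex)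
    \<Rightarrow> (nat \<Rightarrow> complex^'n \<Rightarrow> complex) \<Rightarrow> bool" where
  "is_E_function d m v Pn Pd \<longleftrightarrow> inj_on v {..<m} \<and>
     (\<forall>k<m. polyfun (Pn k) \<and> polyfun (Pd k) \<and> (\<exists>x. Pd k x \<noteq> 0) \<and>
        (\<forall>x (c::real). c \<noteq> 0 \<and> Pd k x \<noteq> 0 \<and> Pd k (c *\<^sub>R x) \<noteq> 0 \<longrightarrow>
            Pn k (c *\<^sub>R x) / Pd k (c *\<^sub>R x) = complex_of_real c powi d * (Pn k x / Pd k x)))"

end

(* Restricted to a segment t1 + s (t' - t1) of parameter space, F(sigma) becomes an exponential
   sum  sum_k R_k(s) exp(psi_k(s))  with rational R_k and psi_k, and the hyperplane condition lets
   one choose t' so that no difference psi_k - psi_l is constant.  Such a sum vanishes only if every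
   R_k does: divide by one term and differentiate to remove it, and note that for rational S and phi
   the equation S' + S phi' = 0 forces S = 0 or phi' = 0, because a logarithmic derivative has only
   simple poles while phi' has none or poles of order at least two.  Hence every numerator P_k
   vanishes on sigma(O); by homogeneity it vanishes on the cone over sigma(O), which has interior
   points by the inner point condition, and therefore everywhere. *)

theory Submission
  imports
    Defs
    "HOL-Computational_Algebra.Fundamental_Theorem_Algebra"
    "HOL-Computational_Algebra.Polynomial_Factorial"
    "HOL-Computational_Algebra.Field_as_Ring"
begin

text \<open>\<open>(p / q)' = poly_wronskian p q / q\<^sup>2\<close>; the sign is opposite to the usual Wronskian.\<close>
definition poly_wronskian :: "'a::idom poly \<Rightarrow> 'a poly \<Rightarrow> 'a poly" where
  "poly_wronskian p q = pderiv p * q - p * pderiv q"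

lemma poly_wronskian_swap: "poly_wronskian q p = - poly_wronskian p q"
  by (simp add: poly_wronskian_def)

lemma poly_wronskian_common_factor:
  "poly_wronskian (g * p) (g * q) = (g * g) * poly_wronskian p q"
  by (simp add: poly_wronskian_def pderiv_mult algebra_simps)

lemma order_poly_wronskian:
  fixes p q :: "'a::{idom,ring_char_0} poly"
  assumes "poly p z \<noteq> 0" "q \<noteq> 0" "order z q = Suc n"
  shows "order z (poly_wronskian p q) = n"
proof -
  define e where "e = [:-z, 1:]"
  obtain r where q: "q = e ^ Suc n * r" and "\<not> e dvd r"
    using order_decomp[OF assms(2), of z] assms(3) unfolding e_def by auto
  hence r: "poly r z \<noteq> 0" unfolding e_def by (simp add: poly_eq_0_iff_dvd)
  define B where "B = e * poly_wronskian p r - smult (of_nat (Suc n)) (p * r)"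
  have "pderiv e = 1" unfolding e_def by (simp add: pderiv_pCons)
  hence "pderiv (e ^ Suc n * r) = e ^ Suc n * pderiv r + r * smult (of_nat (Suc n)) (e ^ n)"
    by (simp only: pderiv_mult pderiv_power_Suc) (simp add: algebra_simps)
  hence "poly_wronskian p q = e ^ n * B"
    unfolding q B_def poly_wronskian_def by (simp add: algebra_simps)
  moreover have "poly B z \<noteq> 0"
    using assms(1) r unfolding B_def e_def by (simp del: of_nat_Suc)
  moreover from this have "B \<noteq> 0" by auto
  ultimately show ?thesis
    using order_mult[of "e ^ n" B z] by (simp add: e_def order_power_n_n order_0I)
qed

lemma order_coprime_eq_0:
  fixes p q :: "'a::field_gcd poly"
  assumes "coprime p q" "p \<noteq> 0" "q \<noteq> 0"
  shows "order z p = 0 \<or> order z q = 0"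
proof (rule ccontr)
  assume "\<not> ?thesis"
  hence "[:-z, 1:] dvd p" "[:-z, 1:] dvd q"
    using assms(2,3) order_root poly_eq_0_iff_dvd by blast+
  hence "is_unit [:-z, 1:]" using assms(1) coprime_common_divisor by blast
  thus False by (simp add: is_unit_iff_degree)
qed

text \<open>Here \<open>order z p + order z q\<close> is the multiplicity of the zero or pole of \<open>p / q\<close> at \<open>z\<close>.\<close>
lemma order_poly_wronskian_coprime:
  fixes p q :: "complex poly"
  assumes "coprime p q" "p \<noteq> 0" "q \<noteq> 0"
  shows "order z (poly_wronskian p q) + 1 = order z p + order z q
         \<or> order z p = 0 \<and> order z q = 0"
proof -
  consider "order z p = 0" "order z q = 0"
    | n where "order z p = 0" "order z q = Suc n"
    | n where "order z q = 0" "order z p = Suc n"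
    using order_coprime_eq_0[OF assms] not0_implies_Suc by blast
  thus ?thesis
  proof cases
    case (2 n)
    hence "poly p z \<noteq> 0" using assms(2) by (simp add: order_root)
    from order_poly_wronskian[OF this assms(3) 2(2)] show ?thesis using 2 by simp
  next
    case (3 n)
    hence "poly q z \<noteq> 0" using assms(3) by (simp add: order_root)
    from order_poly_wronskian[OF this assms(2) 3(2)]
    have "order z (poly_wronskian p q) = n" by (subst poly_wronskian_swap) simp
    thus ?thesis using 3 by simp
  qed simp
qed

lemma degree_eq_0_if_order_eq_0:
  fixes p :: "complex poly"
  assumes "p \<noteq> 0" "\<And>z. order z p = 0"
  shows "degree p = 0"
proof -
  have "constant (poly p)"
    using fundamental_theorem_of_algebra assms order_root by blast
  thus ?thesis by (simp add: constant_degree)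
qed

text \<open>The logarithmic derivative \<open>(p/q)'/(p/q)\<close> has only simple poles, whereas the
  derivative of \<open>c/d\<close> has poles of order at least two; so they cancel only if both vanish.\<close>
lemma poly_wronskian_eq_0_coprime:
  fixes p q c d :: "complex poly"
  assumes "coprime p q" "coprime c d" "p \<noteq> 0" "q \<noteq> 0" "d \<noteq> 0"
    and eq: "poly_wronskian p q * (d * d) + p * q * poly_wronskian c d = 0"
  shows "poly_wronskian c d = 0"
proof (rule ccontr)
  define A where "A = poly_wronskian p q"
  define w where "w = poly_wronskian c d"
  assume "w \<noteq> 0"
  hence "c \<noteq> 0" unfolding w_def poly_wronskian_def by auto
  have "A * (d * d) = - (p * q * w)"
    using eq unfolding A_def w_def by (simp add: eq_neg_iff_add_eq_0)
  moreover have "p * q * w \<noteq> 0" using assms(3,4) \<open>w \<noteq> 0\<close> by simp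
  ultimately have "A \<noteq> 0" and ord_eq: "order z (A * (d * d)) = order z (p * q * w)" for z
    by auto
  have "order z p = 0" "order z q = 0" for z
  proof -
    have "order z A + 2 * order z d = order z p + order z q + order z w"
      using ord_eq[of z] \<open>A \<noteq> 0\<close> assms(3-5) \<open>w \<noteq> 0\<close> by (simp add: order_mult)
    thus "order z p = 0" "order z q = 0"
      using order_poly_wronskian_coprime[OF assms(1,3,4), of z]
        order_poly_wronskian_coprime[OF assms(2) \<open>c \<noteq> 0\<close> assms(5), of z]
        order_coprime_eq_0[OF assms(2) \<open>c \<noteq> 0\<close> assms(5), of z]
      unfolding A_def w_def by arith+
  qed
  hence "degree p = 0" "degree q = 0"
    using degree_eq_0_if_order_eq_0 assms(3,4) by blast+
  hence "pderiv p = 0" "pderiv q = 0" by (simp_all add: pderiv_eq_0_iff)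
  hence "A = 0" unfolding A_def poly_wronskian_def by simp
  with \<open>A \<noteq> 0\<close> show False ..
qed

lemma poly_wronskian_eq_0:
  fixes p q c d :: "complex poly"
  assumes "p \<noteq> 0" "q \<noteq> 0" "d \<noteq> 0"
    and eq: "poly_wronskian p q * (d * d) + p * q * poly_wronskian c d = 0"
  shows "poly_wronskian c d = 0"
proof -
  define g where "g = gcd p q"
  define h where "h = gcd c d"
  define p' where "p' = p div g"
  define q' where "q' = q div g"
  define c' where "c' = c div h"
  define d' where "d' = d div h"
  have g: "p = g * p'" "q = g * q'" and h: "c = h * c'" "d = h * d'"
    unfolding g_def h_def p'_def q'_def c'_def d'_def by simp_all
  have "g \<noteq> 0" "h \<noteq> 0" using assms(2,3) unfolding g_def h_def by simp_all
  have "(g * g * (h * h)) * (poly_wronskian p' q' * (d' * d') + p' * q' * poly_wronskian c' d') = 0"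
    using eq unfolding g h poly_wronskian_common_factor by (simp add: algebra_simps)
  hence "poly_wronskian p' q' * (d' * d') + p' * q' * poly_wronskian c' d' = 0"
    using \<open>g \<noteq> 0\<close> \<open>h \<noteq> 0\<close> by simp
  moreover have "coprime p' q'" "coprime c' d'"
    unfolding p'_def q'_def c'_def d'_def g_def h_def using assms(2,3) by (simp_all add: div_gcd_coprime)
  ultimately have "poly_wronskian c' d' = 0"
    using poly_wronskian_eq_0_coprime assms g h by auto
  thus ?thesis unfolding h poly_wronskian_common_factor by simp
qed

definition rational_on :: "real set \<Rightarrow> (real \<Rightarrow> complex) \<Rightarrow> bool" where
  "rational_on I f \<longleftrightarrow>
     (\<exists>p q. \<forall>s\<in>I. poly q (of_real s) \<noteq> 0 \<and> f s = poly p (of_real s) / poly q (of_real s))"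

lemma rational_on_subset: "rational_on I f \<Longrightarrow> J \<subseteq> I \<Longrightarrow> rational_on J f"
  unfolding rational_on_def by blast

lemma rational_on_cong: "rational_on I f \<Longrightarrow> (\<And>s. s \<in> I \<Longrightarrow> f s = g s) \<Longrightarrow> rational_on I g"
  unfolding rational_on_def by metis

lemma rational_on_poly: "rational_on I (\<lambda>s. poly p (of_real s))"
  unfolding rational_on_def by (intro exI[of _ p] exI[of _ 1]) simp

lemma rational_on_const: "rational_on I (\<lambda>s. c)"
  using rational_on_poly[of I "[:c:]"] by simp

lemma rational_on_add:
  assumes "rational_on I f" "rational_on I g"
  shows "rational_on I (\<lambda>s. f s + g s)"
proof -
  obtain p q p' q' where
    "\<forall>s\<in>I. poly q (of_real s) \<noteq> 0 \<and> f s = poly p (of_real s) / poly q (of_real s)"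
    "\<forall>s\<in>I. poly q' (of_real s) \<noteq> 0 \<and> g s = poly p' (of_real s) / poly q' (of_real s)"
    using assms unfolding rational_on_def by blast
  thus ?thesis unfolding rational_on_def
    by (intro exI[of _ "p * q' + p' * q"] exI[of _ "q * q'"]) (auto simp: add_frac_eq)
qed

lemma rational_on_mult:
  assumes "rational_on I f" "rational_on I g"
  shows "rational_on I (\<lambda>s. f s * g s)"
proof -
  obtain p q p' q' where
    "\<forall>s\<in>I. poly q (of_real s) \<noteq> 0 \<and> f s = poly p (of_real s) / poly q (of_real s)"
    "\<forall>s\<in>I. poly q' (of_real s) \<noteq> 0 \<and> g s = poly p' (of_real s) / poly q' (of_real s)"
    using assms unfolding rational_on_def by blast
  thus ?thesis unfolding rational_on_def
    by (intro exI[of _ "p * p'"] exI[of _ "q * q'"]) auto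
qed

lemma rational_on_divide:
  assumes "rational_on I f" "rational_on I g" "\<forall>s\<in>I. g s \<noteq> 0"
  shows "rational_on I (\<lambda>s. f s / g s)"
proof -
  obtain p q p' q' where
    "\<forall>s\<in>I. poly q (of_real s) \<noteq> 0 \<and> f s = poly p (of_real s) / poly q (of_real s)"
    "\<forall>s\<in>I. poly q' (of_real s) \<noteq> 0 \<and> g s = poly p' (of_real s) / poly q' (of_real s)"
    using assms(1,2) unfolding rational_on_def by blast
  thus ?thesis unfolding rational_on_def using assms(3)
    by (intro exI[of _ "p * q'"] exI[of _ "q * p'"]) auto
qed

lemma rational_on_diff: "rational_on I f \<Longrightarrow> rational_on I g \<Longrightarrow> rational_on I (\<lambda>s. f s - g s)"
  using rational_on_add[of I f "\<lambda>s. (-1) * g s"] rational_on_mult[OF rational_on_const, of I g "-1"]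
  by simp

lemma rational_on_sum:
  "finite K \<Longrightarrow> (\<And>k. k \<in> K \<Longrightarrow> rational_on I (f k)) \<Longrightarrow> rational_on I (\<lambda>s. \<Sum>k\<in>K. f k s)"
  by (induction K rule: finite_induct) (auto intro: rational_on_add rational_on_const)

lemma rational_on_prod:
  "finite K \<Longrightarrow> (\<And>k. k \<in> K \<Longrightarrow> rational_on I (f k)) \<Longrightarrow> rational_on I (\<lambda>s. \<Prod>k\<in>K. f k s)"
  by (induction K rule: finite_induct) (auto intro: rational_on_mult rational_on_const)

lemma rational_on_power: "rational_on I f \<Longrightarrow> rational_on I (\<lambda>s. f s ^ n)"
  by (induction n) (auto intro: rational_on_mult rational_on_const)

lemma poly_eq_0_if_infinite_real_roots:
  fixes P :: "'a::{real_algebra_1,idom} poly"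
  assumes "infinite J" "\<forall>s\<in>J. poly P (of_real s) = 0"
  shows "P = 0"
proof (rule ccontr)
  assume "P \<noteq> 0"
  hence "finite {z. poly P z = 0}" by (rule poly_roots_finite)
  moreover have "of_real ` J \<subseteq> {z. poly P z = 0}" using assms(2) by auto
  ultimately have "finite (of_real ` J :: 'a set)" by (rule finite_subset[rotated])
  moreover have "inj_on (of_real :: real \<Rightarrow> 'a) J" by (auto simp: inj_on_def)
  ultimately show False using assms(1) finite_image_iff by blast
qed

lemma rational_on_eq_const:
  assumes "rational_on I f" "J \<subseteq> I" "infinite J" "\<forall>s\<in>J. f s = c"
  shows "\<forall>s\<in>I. f s = c"
proof -
  obtain p q where pq: "\<forall>s\<in>I. poly q (of_real s) \<noteq> 0 \<and> f s = poly p (of_real s) / poly q (of_real s)"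
    using assms(1) unfolding rational_on_def by blast
  have "\<forall>s\<in>J. poly (p - smult c q) (of_real s) = 0"
    using pq assms(2,4) by (force simp: field_simps)
  hence "p - smult c q = 0" by (rule poly_eq_0_if_infinite_real_roots[OF assms(3)])
  thus ?thesis using pq by simp
qed

lemma has_vector_derivative_rational:
  fixes f :: "real \<Rightarrow> complex"
  assumes "open I" "s \<in> I"
    and pq: "\<forall>s\<in>I. poly q (of_real s) \<noteq> 0 \<and> f s = poly p (of_real s) / poly q (of_real s)"
  shows "(f has_vector_derivative poly (poly_wronskian p q) (of_real s) / poly (q * q) (of_real s)) (at s)"
proof -
  have "((\<lambda>z. poly p z / poly q z) has_field_derivative
      (poly (pderiv p) (of_real s) * poly q (of_real s) - poly p (of_real s) * poly (pderiv q) (of_real s))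
        / (poly q (of_real s) * poly q (of_real s))) (at (of_real s))"
    using pq assms(2) by (intro DERIV_divide poly_DERIV) auto
  hence "((\<lambda>x. poly p (of_real x) / poly q (of_real x)) has_vector_derivative
      poly (poly_wronskian p q) (of_real s) / poly (q * q) (of_real s)) (at s)"
    unfolding poly_wronskian_def by (intro has_vector_derivative_real_field) (simp add: algebra_simps)
  thus ?thesis
    using has_vector_derivative_transform_within_open[OF _ assms(1,2), of _ _ f] pq by auto
qed

lemma rational_on_has_vector_derivative:
  "open I \<Longrightarrow> rational_on I f \<Longrightarrow> s \<in> I \<Longrightarrow> (f has_vector_derivative vector_derivative f (at s)) (at s)"
  unfolding rational_on_def using has_vector_derivative_rational vector_derivative_at by metis

lemma rational_on_vector_derivative:
  assumes "open I" "rational_on I f"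
  shows "rational_on I (\<lambda>s. vector_derivative f (at s))"
proof -
  obtain p q where pq: "\<forall>s\<in>I. poly q (of_real s) \<noteq> 0 \<and> f s = poly p (of_real s) / poly q (of_real s)"
    using assms(2) unfolding rational_on_def by blast
  have "vector_derivative f (at s) = poly (poly_wronskian p q) (of_real s) / poly (q * q) (of_real s)"
    if "s \<in> I" for s
    using vector_derivative_at[OF has_vector_derivative_rational[OF assms(1) that pq]] .
  thus ?thesis unfolding rational_on_def using pq
    by (intro exI[of _ "poly_wronskian p q"] exI[of _ "q * q"]) auto
qed

lemma rational_on_logderiv_eq_0:
  assumes "a < b" "rational_on {a<..<b} S" "rational_on {a<..<b} \<phi>"
    and nonconst: "\<And>c. \<exists>s\<in>{a<..<b}. \<phi> s \<noteq> c"
    and eq: "\<forall>s\<in>{a<..<b}. vector_derivative S (at s) + S s * vector_derivative \<phi> (at s) = 0"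
  shows "\<forall>s\<in>{a<..<b}. S s = 0"
proof -
  let ?I = "{a<..<b}"
  obtain p q where pq: "\<forall>s\<in>?I. poly q (of_real s) \<noteq> 0 \<and> S s = poly p (of_real s) / poly q (of_real s)"
    using assms(2) unfolding rational_on_def by blast
  obtain c d where cd: "\<forall>s\<in>?I. poly d (of_real s) \<noteq> 0 \<and> \<phi> s = poly c (of_real s) / poly d (of_real s)"
    using assms(3) unfolding rational_on_def by blast
  have S': "vector_derivative S (at s) = poly (poly_wronskian p q) (of_real s) / poly (q * q) (of_real s)"
    and \<phi>': "vector_derivative \<phi> (at s) = poly (poly_wronskian c d) (of_real s) / poly (d * d) (of_real s)"
    if "s \<in> ?I" for s
    using vector_derivative_at[OF has_vector_derivative_rational[OF _ that pq]]
      vector_derivative_at[OF has_vector_derivative_rational[OF _ that cd]] by simp_all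
  have "\<forall>s\<in>?I. poly (poly_wronskian p q * (d * d) + p * q * poly_wronskian c d) (of_real s) = 0"
  proof
    fix s assume s: "s \<in> ?I"
    let ?z = "complex_of_real s"
    have "vector_derivative S (at s) + S s * vector_derivative \<phi> (at s) = 0"
      using eq s by blast
    moreover have "S s = poly p ?z / poly q ?z" using pq s by blast
    ultimately have "poly (poly_wronskian p q) ?z / (poly q ?z * poly q ?z)
        + poly p ?z / poly q ?z * (poly (poly_wronskian c d) ?z / (poly d ?z * poly d ?z)) = 0"
      unfolding S'[OF s] \<phi>'[OF s] poly_mult by simp
    moreover have "poly q ?z \<noteq> 0" "poly d ?z \<noteq> 0" using pq cd s by auto
    ultimately show "poly (poly_wronskian p q * (d * d) + p * q * poly_wronskian c d) ?z = 0"
      by (simp add: field_simps)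
  qed
  hence "poly_wronskian p q * (d * d) + p * q * poly_wronskian c d = 0"
    using poly_eq_0_if_infinite_real_roots infinite_Ioo[OF assms(1)] by blast
  moreover obtain s0 where "s0 \<in> ?I" using assms(1) dense by auto
  hence "q \<noteq> 0" "d \<noteq> 0" using pq cd by auto
  ultimately have "p = 0 \<or> poly_wronskian c d = 0" using poly_wronskian_eq_0 by blast
  thus ?thesis
  proof
    assume "p = 0" thus ?thesis using pq by auto
  next
    assume "poly_wronskian c d = 0"
    hence "(\<phi> has_vector_derivative 0) (at s within ?I)" if "s \<in> ?I" for s
      using rational_on_has_vector_derivative[OF _ assms(3) that] \<phi>'[OF that]
      by (auto intro: has_vector_derivative_at_within)
    then obtain c where "\<And>s. s \<in> ?I \<Longrightarrow> \<phi> s = c"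
      using has_vector_derivative_zero_constant[of ?I \<phi>] by auto
    thus ?thesis using nonconst by blast
  qed
qed

lemma sum_exp_const_derivative_eq_0:
  fixes S \<phi> :: "'k \<Rightarrow> real \<Rightarrow> complex"
  assumes "open J" "\<forall>s\<in>J. (\<Sum>k\<in>K. S k s * exp (\<phi> k s)) = c"
    and "\<And>k s. k \<in> K \<Longrightarrow> s \<in> J \<Longrightarrow> (S k has_vector_derivative S' k s) (at s)"
    and "\<And>k s. k \<in> K \<Longrightarrow> s \<in> J \<Longrightarrow> (\<phi> k has_vector_derivative \<phi>' k s) (at s)"
  shows "\<forall>s\<in>J. (\<Sum>k\<in>K. (S' k s + S k s * \<phi>' k s) * exp (\<phi> k s)) = 0"
proof
  fix s assume s: "s \<in> J"
  let ?h = "\<lambda>s. \<Sum>k\<in>K. S k s * exp (\<phi> k s)"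
  have "(?h has_vector_derivative (\<Sum>k\<in>K. (S' k s + S k s * \<phi>' k s) * exp (\<phi> k s))) (at s)"
  proof (intro has_vector_derivative_sum)
    fix k assume k: "k \<in> K"
    have "((exp \<circ> \<phi> k) has_vector_derivative \<phi>' k s * exp (\<phi> k s)) (at s)"
      using assms(4)[OF k s] by (intro field_vector_diff_chain_at) (auto intro: DERIV_exp)
    hence "((\<lambda>x. S k x * exp (\<phi> k x)) has_vector_derivative
        S k s * (\<phi>' k s * exp (\<phi> k s)) + S' k s * exp (\<phi> k s)) (at s)"
      using assms(3)[OF k s] by (intro has_vector_derivative_mult) (simp_all add: o_def)
    thus "((\<lambda>x. S k x * exp (\<phi> k x)) has_vector_derivative
        (S' k s + S k s * \<phi>' k s) * exp (\<phi> k s)) (at s)"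
      by (simp add: algebra_simps)
  qed
  moreover have "(?h has_vector_derivative 0) (at s)"
    by (rule has_vector_derivative_transform_within_open[OF has_vector_derivative_const assms(1) s])
      (use assms(2) in auto)
  ultimately show "(\<Sum>k\<in>K. (S' k s + S k s * \<phi>' k s) * exp (\<phi> k s)) = 0"
    by (rule vector_derivative_unique_at)
qed

lemma rational_on_nonzero_subinterval:
  assumes "rational_on {a<..<b} f" "f s0 \<noteq> 0" "s0 \<in> {a<..<b}"
  obtains a' b' where "a \<le> a'" "a' < s0" "s0 < b'" "b' \<le> b" "\<forall>s\<in>{a'<..<b'}. f s \<noteq> 0"
proof -
  have "continuous (at s0) f"
    using has_vector_derivative_continuous[OF rational_on_has_vector_derivative[OF _ assms(1,3)]]
    by simp
  then obtain e where e: "e > 0" "\<forall>s. dist s0 s < e \<longrightarrow> f s \<noteq> 0"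
    using continuous_at_avoid assms(2) by blast
  show ?thesis
    by (rule that[of "max a (s0 - e)" "min b (s0 + e)"]) (use assms(3) e in \<open>auto simp: dist_real_def\<close>)
qed

lemma sum_exp_divide_pivot:
  fixes R \<psi> :: "'k \<Rightarrow> complex"
  assumes "finite K" "j \<notin> K" "R j \<noteq> 0" "(\<Sum>k\<in>insert j K. R k * exp (\<psi> k)) = 0"
  shows "(\<Sum>k\<in>K. R k / R j * exp (\<psi> k - \<psi> j)) = -1"
proof -
  have "(\<Sum>k\<in>K. R k / R j * exp (\<psi> k - \<psi> j)) = (\<Sum>k\<in>K. R k * exp (\<psi> k)) / (R j * exp (\<psi> j))"
    by (simp add: sum_divide_distrib exp_diff)
  also have "(\<Sum>k\<in>K. R k * exp (\<psi> k)) = - (R j * exp (\<psi> j))"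
    using assms(1,2,4) by (simp add: eq_neg_iff_add_eq_0 add.commute)
  finally show ?thesis using assms(3) by simp
qed

lemma rational_exp_sum_reduce:
  fixes R \<psi> S \<phi> T :: "'k \<Rightarrow> real \<Rightarrow> complex"
  assumes "open J" "finite K" "j \<notin> K" "\<forall>s\<in>J. R j s \<noteq> 0"
    and rat: "\<forall>k\<in>insert j K. rational_on J (R k) \<and> rational_on J (\<psi> k)"
    and sum: "\<forall>s\<in>J. (\<Sum>k\<in>insert j K. R k s * exp (\<psi> k s)) = 0"
    and S: "\<And>k s. S k s = R k s / R j s" and \<phi>: "\<And>k s. \<phi> k s = \<psi> k s - \<psi> j s"
    and T: "\<And>k s. T k s = vector_derivative (S k) (at s) + S k s * vector_derivative (\<phi> k) (at s)"
  shows "\<And>k. k \<in> K \<Longrightarrow> rational_on J (S k) \<and> rational_on J (\<phi> k) \<and> rational_on J (T k)"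
    and "\<forall>s\<in>J. (\<Sum>k\<in>K. T k s * exp (\<phi> k s)) = 0"
proof -
  have ratS: "rational_on J (S k)" "rational_on J (\<phi> k)" if "k \<in> K" for k
    unfolding S \<phi> using rat that assms(4) by (auto intro!: rational_on_divide rational_on_diff)
  thus "rational_on J (S k) \<and> rational_on J (\<phi> k) \<and> rational_on J (T k)" if "k \<in> K" for k
    unfolding T using that assms(1)
    by (auto intro!: rational_on_add rational_on_mult rational_on_vector_derivative)
  have "\<forall>s\<in>J. (\<Sum>k\<in>K. S k s * exp (\<phi> k s)) = -1"
  proof
    fix s assume "s \<in> J"
    thus "(\<Sum>k\<in>K. S k s * exp (\<phi> k s)) = -1"
      unfolding S \<phi> using sum assms(4) by (intro sum_exp_divide_pivot[OF assms(2,3)]) auto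
  qed
  thus "\<forall>s\<in>J. (\<Sum>k\<in>K. T k s * exp (\<phi> k s)) = 0"
    unfolding T
  proof (rule sum_exp_const_derivative_eq_0[OF assms(1)])
    fix k s assume "k \<in> K" "s \<in> J"
    thus "(S k has_vector_derivative vector_derivative (S k) (at s)) (at s)"
      "(\<phi> k has_vector_derivative vector_derivative (\<phi> k) (at s)) (at s)"
      using ratS rational_on_has_vector_derivative[OF assms(1)] by blast+
  qed
qed

text \<open>Dividing by the pivot term \<open>R j e\<^sup>\<psi>\<^sup>j\<close> and differentiating removes it and keeps the
  coefficients rational; the logarithmic-derivative lemma then transfers vanishing back.\<close>
lemma rational_exp_sum_eq_0:
  fixes R \<psi> :: "'k \<Rightarrow> real \<Rightarrow> complex"
  assumes "finite K" "a < b"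
    and "\<And>k. k \<in> K \<Longrightarrow> rational_on {a<..<b} (R k) \<and> rational_on {a<..<b} (\<psi> k)"
    and "\<And>k l c. k \<in> K \<Longrightarrow> l \<in> K \<Longrightarrow> k \<noteq> l \<Longrightarrow> \<exists>s\<in>{a<..<b}. \<psi> k s - \<psi> l s \<noteq> c"
    and "\<forall>s\<in>{a<..<b}. (\<Sum>k\<in>K. R k s * exp (\<psi> k s)) = 0"
  shows "\<forall>k\<in>K. \<forall>s\<in>{a<..<b}. R k s = 0"
  using assms
proof (induction K arbitrary: a b R \<psi> rule: finite_induct)
  case empty
  thus ?case by simp
next
  case (insert j K)
  let ?I = "{a<..<b}"
  have rat: "rational_on ?I (R k)" "rational_on ?I (\<psi> k)" if "k \<in> insert j K" for k
    using insert.prems(2) that by simp_all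
  have Rj: "R j s0 = 0" if s0: "s0 \<in> ?I" for s0
  proof (rule ccontr)
    assume "R j s0 \<noteq> 0"
    then obtain a' b' where ab': "a \<le> a'" "a' < s0" "s0 < b'" "b' \<le> b"
      and Rj: "\<forall>s\<in>{a'<..<b'}. R j s \<noteq> 0"
      using rational_on_nonzero_subinterval[OF rat(1) _ s0] by blast
    let ?J = "{a'<..<b'}"
    have "?J \<subseteq> ?I" "a' < b'" using ab' by auto
    define S where "S k s = R k s / R j s" for k s
    define \<phi> where "\<phi> k s = \<psi> k s - \<psi> j s" for k s
    define T where "T k s = vector_derivative (S k) (at s) + S k s * vector_derivative (\<phi> k) (at s)"
      for k s
    have ratJ: "\<forall>k\<in>insert j K. rational_on ?J (R k) \<and> rational_on ?J (\<psi> k)"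
      using rat \<open>?J \<subseteq> ?I\<close> by (blast intro: rational_on_subset)
    have "\<forall>s\<in>?J. (\<Sum>k\<in>insert j K. R k s * exp (\<psi> k s)) = 0"
      using insert.prems(4) \<open>?J \<subseteq> ?I\<close> by blast
    note reduced = rational_exp_sum_reduce[OF open_greaterThanLessThan insert(1,2) Rj ratJ this
        S_def \<phi>_def T_def]
    have nonconst: "\<exists>s\<in>?J. \<psi> k s - \<psi> l s \<noteq> c"
      if "k \<in> insert j K" "l \<in> insert j K" "k \<noteq> l" for k l c
      using rational_on_eq_const[OF rational_on_diff[OF rat(2) rat(2)] \<open>?J \<subseteq> ?I\<close>]
        infinite_Ioo[OF \<open>a' < b'\<close>] insert.prems(3) that by metis
    have T0: "\<forall>k\<in>K. \<forall>s\<in>?J. T k s = 0"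
    proof (rule insert.IH[OF \<open>a' < b'\<close> _ _ reduced(2)])
      show "rational_on ?J (T k) \<and> rational_on ?J (\<phi> k)" if "k \<in> K" for k
        using reduced(1)[OF that] by blast
      show "\<exists>s\<in>?J. \<phi> k s - \<phi> l s \<noteq> c" if "k \<in> K" "l \<in> K" "k \<noteq> l" for k l c
        using nonconst[of k l c] that unfolding \<phi>_def by simp
    qed
    have "\<forall>s\<in>?J. S k s = 0" if "k \<in> K" for k
    proof (rule rational_on_logderiv_eq_0[OF \<open>a' < b'\<close>])
      show "rational_on ?J (S k)" "rational_on ?J (\<phi> k)" using reduced(1)[OF that] by blast+
      show "\<exists>s\<in>?J. \<phi> k s \<noteq> c" for c
        using nonconst[of k j c] that insert(2) unfolding \<phi>_def by auto
      show "\<forall>s\<in>?J. vector_derivative (S k) (at s) + S k s * vector_derivative (\<phi> k) (at s) = 0"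
        using T0 that unfolding T_def by blast
    qed
    hence "(\<Sum>k\<in>insert j K. R k s0 * exp (\<psi> k s0)) = R j s0 * exp (\<psi> j s0)"
      using insert(1,2) ab' Rj unfolding S_def by simp
    thus False using insert.prems(4) s0 \<open>R j s0 \<noteq> 0\<close> by simp
  qed
  moreover have "\<forall>k\<in>K. \<forall>s\<in>?I. R k s = 0"
  proof (rule insert.IH[OF insert.prems(1)])
    show "\<forall>s\<in>?I. (\<Sum>k\<in>K. R k s * exp (\<psi> k s)) = 0"
      using insert.prems(4) Rj insert(1,2) by simp
  qed (use insert.prems(2,3) in auto)
  ultimately show ?case by simp
qed

definition poly_on_lines :: "('a::real_vector \<Rightarrow> 'b::{real_algebra_1,comm_ring_1}) \<Rightarrow> bool" where
  "poly_on_lines f \<longleftrightarrow> (\<forall>a b. \<exists>P. \<forall>s::real. f (a + s *\<^sub>R b) = poly P (of_real s))"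

lemma poly_on_lines_const: "poly_on_lines (\<lambda>x. c)"
  unfolding poly_on_lines_def by (intro allI exI[of _ "[:c:]"]) simp

lemma poly_on_lines_add: "poly_on_lines f \<Longrightarrow> poly_on_lines g \<Longrightarrow> poly_on_lines (\<lambda>x. f x + g x)"
  unfolding poly_on_lines_def by (metis poly_add)

lemma poly_on_lines_diff: "poly_on_lines f \<Longrightarrow> poly_on_lines g \<Longrightarrow> poly_on_lines (\<lambda>x. f x - g x)"
  unfolding poly_on_lines_def by (metis poly_diff)

lemma poly_on_lines_mult: "poly_on_lines f \<Longrightarrow> poly_on_lines g \<Longrightarrow> poly_on_lines (\<lambda>x. f x * g x)"
  unfolding poly_on_lines_def by (metis poly_mult)

lemma poly_on_lines_prod:
  "finite A \<Longrightarrow> (\<And>a. a \<in> A \<Longrightarrow> poly_on_lines (f a)) \<Longrightarrow> poly_on_lines (\<lambda>x. \<Prod>a\<in>A. f a x)"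
  by (induction A rule: finite_induct) (auto intro: poly_on_lines_mult poly_on_lines_const)

lemma poly_on_lines_eq_0_on_open:
  fixes f :: "'a::real_normed_vector \<Rightarrow> 'b::{real_algebra_1,idom}"
  assumes "poly_on_lines f" "open S" "y \<in> S" "\<forall>y\<in>S. f y = 0"
  shows "f x = 0"
proof -
  obtain e where e: "e > 0" "ball y e \<subseteq> S" using assms(2,3) open_contains_ball by blast
  obtain P where P: "\<forall>s. f (y + s *\<^sub>R (x - y)) = poly P (of_real s)"
    using assms(1) unfolding poly_on_lines_def by blast
  define \<delta> where "\<delta> = e / (norm (x - y) + 1)"
  have n: "norm (x - y) + 1 > 0" by (simp add: add_nonneg_pos)
  hence "\<delta> > 0" unfolding \<delta>_def using e by simp
  have "\<forall>s\<in>{0<..<\<delta>}. poly P (of_real s) = 0"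
  proof
    fix s assume s: "s \<in> {0<..<\<delta>}"
    have "norm (s *\<^sub>R (x - y)) \<le> s * (norm (x - y) + 1)" using s by simp
    also have "\<dots> < \<delta> * (norm (x - y) + 1)"
      using s n by (intro mult_strict_right_mono) auto
    also have "\<dots> = e" unfolding \<delta>_def using n by simp
    finally have "y + s *\<^sub>R (x - y) \<in> S" using e(2) by (auto simp: dist_norm)
    hence "f (y + s *\<^sub>R (x - y)) = 0" using assms(4) by blast
    thus "poly P (of_real s) = 0" using P by simp
  qed
  hence "P = 0" using poly_eq_0_if_infinite_real_roots infinite_Ioo[OF \<open>\<delta> > 0\<close>] by blast
  thus ?thesis using P[rule_format, of 1] by simp
qed

lemma poly_on_lines_mult_eq_0:
  fixes f g :: "'a::real_vector \<Rightarrow> 'b::{real_algebra_1,idom}"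
  assumes "poly_on_lines f" "poly_on_lines g" "\<forall>x. f x * g x = 0"
  shows "(\<forall>x. f x = 0) \<or> (\<forall>x. g x = 0)"
proof (rule ccontr)
  assume "\<not> ?thesis"
  then obtain a b where "f a \<noteq> 0" "g b \<noteq> 0" by blast
  obtain P Q where P: "\<forall>s. f (a + s *\<^sub>R (b - a)) = poly P (of_real s)"
    and Q: "\<forall>s. g (a + s *\<^sub>R (b - a)) = poly Q (of_real s)"
    using assms(1,2) unfolding poly_on_lines_def by metis
  have "P \<noteq> 0" "Q \<noteq> 0" using P[rule_format, of 0] Q[rule_format, of 1] \<open>f a \<noteq> 0\<close> \<open>g b \<noteq> 0\<close> by auto
  moreover have "\<forall>s\<in>UNIV. poly (P * Q) (of_real s) = 0"
  proof
    fix s :: real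
    show "poly (P * Q) (of_real s) = 0" using P Q assms(3)[rule_format, of "a + s *\<^sub>R (b - a)"] by simp
  qed
  hence "P * Q = 0" using poly_eq_0_if_infinite_real_roots infinite_UNIV_char_0 by blast
  ultimately show False by simp
qed

lemma poly_on_lines_prod_nonzero:
  fixes f :: "'i \<Rightarrow> 'a::real_vector \<Rightarrow> 'b::{real_algebra_1,idom}"
  assumes "finite A" "\<And>a. a \<in> A \<Longrightarrow> poly_on_lines (f a) \<and> (\<exists>x. f a x \<noteq> 0)"
  shows "\<exists>x. (\<Prod>a\<in>A. f a x) \<noteq> 0"
  using assms
proof (induction A rule: finite_induct)
  case (insert a A)
  have "poly_on_lines (f a)" using insert.prems by blast
  moreover have "poly_on_lines (\<lambda>x. \<Prod>a\<in>A. f a x)"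
    by (rule poly_on_lines_prod[OF insert(1)]) (use insert.prems in blast)
  moreover have "\<exists>x. f a x \<noteq> 0" using insert.prems by blast
  moreover have "\<exists>x. (\<Prod>a\<in>A. f a x) \<noteq> 0" by (rule insert.IH) (use insert.prems in auto)
  ultimately have "\<not> (\<forall>x. f a x * (\<Prod>a\<in>A. f a x) = 0)"
    using poly_on_lines_mult_eq_0 by blast
  thus ?case using insert(1,2) by auto
qed simp

lemma poly_on_lines_fraction_sum:
  fixes N Q :: "'i \<Rightarrow> 'a::real_vector \<Rightarrow> 'b::{real_algebra_1,field}"
  assumes "finite K" "\<And>k. k \<in> K \<Longrightarrow> poly_on_lines (N k) \<and> poly_on_lines (Q k) \<and> (\<forall>t\<in>D. Q k t \<noteq> 0)"
  obtains N' Q' where "poly_on_lines N'" "poly_on_lines Q'"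
    "\<forall>t\<in>D. Q' t \<noteq> 0 \<and> (\<Sum>k\<in>K. N k t / Q k t) = N' t / Q' t"
  using assms
proof (induction K arbitrary: thesis rule: finite_induct)
  case empty
  show ?case by (rule empty.prems(1)[of "\<lambda>t. 0" "\<lambda>t. 1"]) (simp_all add: poly_on_lines_const)
next
  case (insert k K)
  obtain N' Q' where N'Q': "poly_on_lines N'" "poly_on_lines Q'"
    "\<forall>t\<in>D. Q' t \<noteq> 0 \<and> (\<Sum>k\<in>K. N k t / Q k t) = N' t / Q' t"
    by (rule insert.IH) (use insert.prems(2) in auto)
  show ?case
  proof (rule insert.prems(1)[of "\<lambda>t. N k t * Q' t + N' t * Q k t" "\<lambda>t. Q k t * Q' t"])
    show "poly_on_lines (\<lambda>t. N k t * Q' t + N' t * Q k t)" "poly_on_lines (\<lambda>t. Q k t * Q' t)"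
      using N'Q' insert.prems(2) by (auto intro!: poly_on_lines_add poly_on_lines_mult)
    show "\<forall>t\<in>D. Q k t * Q' t \<noteq> 0 \<and>
        (\<Sum>k\<in>insert k K. N k t / Q k t) = (N k t * Q' t + N' t * Q k t) / (Q k t * Q' t)"
      using N'Q' insert.prems(2) insert(1,2) by (simp add: add_frac_eq)
  qed
qed

lemma polyfun_line:
  fixes f :: "'a::comm_ring_1 ^ 'i::finite \<Rightarrow> 'a"
  assumes "polyfun f"
  obtains P where "\<And>z. f (a + z *s b) = poly P z"
proof -
  obtain E c where E: "\<forall>x. f x = (\<Sum>\<alpha>\<in>E. c \<alpha> * (\<Prod>i\<in>UNIV. (x $ i) ^ (\<alpha> i)))"
    using assms unfolding polyfun_def by blast
  show ?thesis
    by (rule that[of "\<Sum>\<alpha>\<in>E. [:c \<alpha>:] * (\<Prod>i\<in>UNIV. [:a $ i, b $ i:] ^ (\<alpha> i))"])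
      (simp add: E poly_sum poly_prod algebra_simps)
qed

lemma polyfun_poly_on_lines:
  fixes f :: "real^'n::finite \<Rightarrow> real"
  assumes "polyfun f"
  shows "poly_on_lines f"
  unfolding poly_on_lines_def
proof (intro allI)
  fix a b :: "real^'n"
  obtain P where "\<And>z. f (a + z *s b) = poly P z" using polyfun_line[OF assms] by blast
  thus "\<exists>P. \<forall>s. f (a + s *\<^sub>R b) = poly P (of_real s)" by (auto simp: scalar_mult_eq_scaleR)
qed

lemma cembed_add_scaleR: "cembed (a + s *\<^sub>R b) = cembed a + of_real s *s cembed b"
  by (simp add: cembed_def vec_eq_iff)

lemma cembed_scaleR: "cembed (c *\<^sub>R y) = c *\<^sub>R cembed y"
  by (simp add: cembed_def vec_eq_iff of_real_def)

lemma rdot_cembed: "rdot v (cembed y) = complex_of_real (inner v y)"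
  by (simp add: rdot_def cembed_def inner_vec_def)

lemma polyfun_cembed_poly_on_lines:
  fixes f :: "complex^'n::finite \<Rightarrow> complex"
  assumes "polyfun f"
  shows "poly_on_lines (\<lambda>y. f (cembed y))"
  unfolding poly_on_lines_def cembed_add_scaleR
proof (intro allI)
  fix a b :: "real^'n"
  obtain P where "\<And>z. f (cembed a + z *s cembed b) = poly P z"
    using polyfun_line[OF assms] by blast
  thus "\<exists>P. \<forall>s. f (cembed a + complex_of_real s *s cembed b) = poly P (complex_of_real s)"
    by auto
qed

lemma polyfun_eq_0_if_real_eq_0:
  fixes f :: "complex^'n::finite \<Rightarrow> complex"
  assumes "polyfun f" "\<forall>y. f (cembed y) = 0"
  shows "f x = 0"
proof -
  define a where "a = (\<chi> i. Re (x $ i))"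
  define b where "b = (\<chi> i. Im (x $ i))"
  obtain P where P: "\<And>z. f (cembed a + z *s cembed b) = poly P z"
    using polyfun_line[OF assms(1)] by blast
  have "\<forall>s\<in>UNIV. poly P (of_real s) = 0"
  proof
    fix s :: real
    have "poly P (of_real s) = f (cembed (a + s *\<^sub>R b))" by (simp add: P cembed_add_scaleR)
    thus "poly P (of_real s) = 0" using assms(2) by simp
  qed
  hence "P = 0" using poly_eq_0_if_infinite_real_roots infinite_UNIV_char_0 by blast
  moreover have "x = cembed a + \<i> *s cembed b"
    by (simp add: vec_eq_iff a_def b_def cembed_def complex_eq_iff)
  ultimately show ?thesis using P by simp
qed

lemma poly_map_poly_of_real:
  "poly (map_poly of_real p) (of_real x) = (of_real (poly p x) :: 'a::{real_algebra_1,comm_ring_1})"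
  by (induction p) (auto simp: map_poly_pCons)

lemma rational_on_rp_param_line:
  assumes "rp_param \<sigma> D" "\<forall>s\<in>I. a + s *\<^sub>R b \<in> D"
  shows "rational_on I (\<lambda>s. complex_of_real (\<sigma> (a + s *\<^sub>R b) $ j))"
proof -
  obtain p q where pq: "polyfun p" "polyfun q" "\<forall>t\<in>D. q t \<noteq> 0 \<and> \<sigma> t $ j = p t / q t"
    using assms(1) unfolding rp_param_def by blast
  obtain P Q where PQ: "\<forall>s. p (a + s *\<^sub>R b) = poly P s" "\<forall>s. q (a + s *\<^sub>R b) = poly Q s"
    using pq(1,2)[THEN polyfun_poly_on_lines] unfolding poly_on_lines_def by force
  show ?thesis unfolding rational_on_def
  proof (intro exI ballI conjI)
    fix s assume "s \<in> I"
    hence "q (a + s *\<^sub>R b) \<noteq> 0" "\<sigma> (a + s *\<^sub>R b) $ j = p (a + s *\<^sub>R b) / q (a + s *\<^sub>R b)"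
      using pq(3) assms(2) by auto
    moreover have "poly (map_poly of_real P) (of_real s) = complex_of_real (p (a + s *\<^sub>R b))"
      "poly (map_poly of_real Q) (of_real s) = complex_of_real (q (a + s *\<^sub>R b))"
      using PQ by (simp_all add: poly_map_poly_of_real)
    ultimately show "poly (map_poly complex_of_real Q) (of_real s) \<noteq> 0"
      "complex_of_real (\<sigma> (a + s *\<^sub>R b) $ j)
         = poly (map_poly of_real P) (of_real s) / poly (map_poly of_real Q) (of_real s)"
      by simp_all
  qed
qed

lemma rp_param_inner_fraction:
  assumes "rp_param \<sigma> D"
  obtains N Q where "poly_on_lines N" "poly_on_lines Q" "\<forall>t\<in>D. Q t \<noteq> 0 \<and> inner a (\<sigma> t) = N t / Q t"
proof -
  obtain p q where pq: "\<forall>j. polyfun (p j) \<and> polyfun (q j) \<and> (\<forall>t\<in>D. q j t \<noteq> 0 \<and> \<sigma> t $ j = p j t / q j t)"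
    using assms unfolding rp_param_def by metis
  have lines: "poly_on_lines (\<lambda>t. a $ j * p j t)" "poly_on_lines (q j)" for j
    using poly_on_lines_mult[OF poly_on_lines_const polyfun_poly_on_lines] polyfun_poly_on_lines pq
    by blast+
  obtain N Q where NQ: "poly_on_lines N" "poly_on_lines Q"
    "\<forall>t\<in>D. Q t \<noteq> 0 \<and> (\<Sum>j\<in>UNIV. a $ j * p j t / q j t) = N t / Q t"
    by (rule poly_on_lines_fraction_sum[of UNIV "\<lambda>j t. a $ j * p j t" q D]) (use lines pq in auto)
  have "inner a (\<sigma> t) = (\<Sum>j\<in>UNIV. a $ j * p j t / q j t)" if "t \<in> D" for t
    using pq that by (simp add: inner_vec_def)
  thus ?thesis using that NQ by simp
qed

text \<open>The product of the numerators of \<open>inner a (\<sigma> t) - c a\<close> is polynomial along lines and,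
  by the hyperplane condition, not identically zero, so it cannot vanish on all of \<open>V\<close>.\<close>
lemma rp_param_avoids_hyperplanes:
  assumes "rp_param \<sigma> D" "U \<subseteq> D" "hyperplane_condition \<sigma> U" "finite A" "0 \<notin> A"
    and "open V" "t0 \<in> V" "V \<subseteq> D"
  obtains t where "t \<in> V" "\<forall>a\<in>A. inner a (\<sigma> t) \<noteq> c a"
proof -
  have "\<forall>a. \<exists>N Q. poly_on_lines N \<and> poly_on_lines Q \<and> (\<forall>t\<in>D. Q t \<noteq> 0 \<and> inner a (\<sigma> t) = N t / Q t)"
    using rp_param_inner_fraction[OF assms(1)] by metis
  then obtain N Q where NQ: "\<And>a. poly_on_lines (N a)" "\<And>a. poly_on_lines (Q a)"
    "\<And>a t. t \<in> D \<Longrightarrow> Q a t \<noteq> 0 \<and> inner a (\<sigma> t) = N a t / Q a t"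
    by metis
  define F where "F t = (\<Prod>a\<in>A. N a t - c a * Q a t)" for t
  have factor: "N a t - c a * Q a t = Q a t * (inner a (\<sigma> t) - c a)" if "t \<in> D" for a t
    using NQ(3)[OF that, of a] by (simp add: field_simps)
  have lines: "poly_on_lines (\<lambda>t. N a t - c a * Q a t)" for a
    using NQ by (intro poly_on_lines_diff poly_on_lines_mult poly_on_lines_const)
  have "\<exists>t. F t \<noteq> 0" unfolding F_def
  proof (rule poly_on_lines_prod_nonzero[OF assms(4)])
    fix a assume "a \<in> A"
    hence "a \<noteq> 0" using assms(5) by auto
    then obtain t where t: "t \<in> U" "inner a (\<sigma> t) \<noteq> c a"
      using assms(3) unfolding hyperplane_condition_def by blast
    hence "t \<in> D" using assms(2) by blast
    hence "N a t - c a * Q a t \<noteq> 0"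
      unfolding factor[OF \<open>t \<in> D\<close>] using NQ(3)[OF \<open>t \<in> D\<close>, of a] t(2) by simp
    thus "poly_on_lines (\<lambda>t. N a t - c a * Q a t) \<and> (\<exists>t. N a t - c a * Q a t \<noteq> 0)"
      using lines by blast
  qed
  moreover have "poly_on_lines F" unfolding F_def using lines by (rule poly_on_lines_prod[OF assms(4)])
  ultimately obtain t where t: "t \<in> V" "F t \<noteq> 0"
    using poly_on_lines_eq_0_on_open[OF _ assms(6,7)] by blast
  hence "t \<in> D" using assms(8) by blast
  have "\<forall>a\<in>A. N a t - c a * Q a t \<noteq> 0" using t(2) assms(4) unfolding F_def by auto
  hence "\<forall>a\<in>A. inner a (\<sigma> t) \<noteq> c a" unfolding factor[OF \<open>t \<in> D\<close>] by simp
  thus ?thesis using that t(1) by blast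
qed

lemma rational_on_polyfun:
  fixes f :: "complex^'n::finite \<Rightarrow> complex"
  assumes "polyfun f" "\<And>j. rational_on I (\<lambda>s. X s $ j)"
  shows "rational_on I (\<lambda>s. f (X s))"
proof -
  obtain E c where E: "finite E" "\<forall>x. f x = (\<Sum>\<alpha>\<in>E. c \<alpha> * (\<Prod>i\<in>UNIV. (x $ i) ^ (\<alpha> i)))"
    using assms(1) unfolding polyfun_def by blast
  have "rational_on I (\<lambda>s. \<Sum>\<alpha>\<in>E. c \<alpha> * (\<Prod>i\<in>UNIV. (X s $ i) ^ (\<alpha> i)))"
    using assms(2) E(1)
    by (intro rational_on_sum rational_on_mult rational_on_const rational_on_prod rational_on_power) auto
  thus ?thesis by (rule rational_on_cong) (simp add: E(2))
qed

lemma rp_param_separating_line: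
  assumes "rp_param \<sigma> D" "open U" "U \<subseteq> D" "hyperplane_condition \<sigma> U" "finite A" "0 \<notin> A"
    and "t1 \<in> U"
  obtains t' where "\<forall>s\<in>{-1<..<2}. t1 + s *\<^sub>R (t' - t1) \<in> U"
    "\<forall>a\<in>A. inner a (\<sigma> t') \<noteq> inner a (\<sigma> t1)"
proof -
  obtain r where r: "r > 0" "ball t1 r \<subseteq> U" using assms(2,7) open_contains_ball by blast
  hence "ball t1 (r / 2) \<subseteq> D" using assms(3) subset_ball[of "r / 2" r t1] by auto
  then obtain t' where t': "t' \<in> ball t1 (r / 2)" "\<forall>a\<in>A. inner a (\<sigma> t') \<noteq> inner a (\<sigma> t1)"
    using rp_param_avoids_hyperplanes[OF assms(1,3-6), of "ball t1 (r / 2)" t1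
        "\<lambda>a. inner a (\<sigma> t1)"] r(1) by auto
  have "t1 + s *\<^sub>R (t' - t1) \<in> U" if "s \<in> {-1<..<2}" for s
  proof -
    have "dist t1 (t1 + s *\<^sub>R (t' - t1)) = \<bar>s\<bar> * dist t1 t'"
      by (simp add: dist_norm norm_minus_commute)
    also have "\<dots> < 2 * (r / 2)"
      using that t'(1) by (intro mult_strict_mono') auto
    finally show ?thesis using r(2) by auto
  qed
  thus ?thesis using that t'(2) by blast
qed

text \<open>Along a segment in parameter space on which no two frequencies have constant phase
  difference, the vanishing E-function becomes an exponential sum with rational data.\<close>
lemma E_fun_numerator_eq_0_on_surface:
  fixes \<sigma> :: "real^'m::finite \<Rightarrow> real^('m option)"
    and v :: "nat \<Rightarrow> real^('m option)" and Pn Pd :: "nat \<Rightarrow> complex^('m option) \<Rightarrow> complex"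
  assumes rp: "rp_param \<sigma> D" and "open U" "U \<subseteq> D" "hyperplane_condition \<sigma> U"
    and inj: "inj_on v {..<m}" and polys: "\<forall>k<m. polyfun (Pn k) \<and> polyfun (Pd k)"
    and van: "\<forall>t\<in>U. E_defined m Pd (cembed (\<sigma> t)) \<and> E_fun m v Pn Pd (cembed (\<sigma> t)) = 0"
    and "t1 \<in> U" "k < m"
  shows "Pn k (cembed (\<sigma> t1)) = 0"
proof -
  define A where "A = (\<lambda>(k, l). v k - v l) ` {(k, l). k < m \<and> l < m \<and> k \<noteq> l}"
  have "finite A" unfolding A_def
    by (rule finite_imageI, rule finite_subset[of _ "{..<m} \<times> {..<m}"]) auto
  moreover have "0 \<notin> A" using inj unfolding A_def inj_on_def by auto
  ultimately obtain t' where LU: "\<forall>s\<in>{-1<..<2}. t1 + s *\<^sub>R (t' - t1) \<in> U"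
    and t': "\<forall>a\<in>A. inner a (\<sigma> t') \<noteq> inner a (\<sigma> t1)"
    using rp_param_separating_line[OF rp assms(2-4) _ _ \<open>t1 \<in> U\<close>] by blast
  let ?I = "{-1<..<2 :: real}"
  define X where "X s = cembed (\<sigma> (t1 + s *\<^sub>R (t' - t1)))" for s
  define R where "R k s = Pn k (X s) / Pd k (X s)" for k s
  define \<psi> where "\<psi> k s = - \<i> * rdot (v k) (X s)" for k s
  have ratX: "rational_on ?I (\<lambda>s. X s $ j)" for j
  proof -
    have "rational_on ?I (\<lambda>s. complex_of_real (\<sigma> (t1 + s *\<^sub>R (t' - t1)) $ j))"
      by (rule rational_on_rp_param_line[OF rp]) (use LU assms(3) in auto)
    thus ?thesis unfolding X_def cembed_def by simp
  qed
  have Pd: "Pd k (X s) \<noteq> 0" if "s \<in> ?I" "k < m" for k s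
    using van LU that unfolding E_defined_def X_def by blast
  have "\<forall>k\<in>{..<m}. \<forall>s\<in>?I. R k s = 0"
  proof (rule rational_exp_sum_eq_0)
    fix k assume "k \<in> {..<m}"
    hence "rational_on ?I (\<lambda>s. Pn k (X s))" "rational_on ?I (\<lambda>s. Pd k (X s))"
      using polys by (auto intro: rational_on_polyfun ratX)
    hence "rational_on ?I (R k)" unfolding R_def using Pd \<open>k \<in> {..<m}\<close>
      by (intro rational_on_divide) auto
    moreover have "rational_on ?I (\<psi> k)" unfolding \<psi>_def rdot_def
      by (intro rational_on_mult[OF rational_on_const] rational_on_sum ratX) simp
    ultimately show "rational_on ?I (R k) \<and> rational_on ?I (\<psi> k)" ..
  next
    fix k l c assume "k \<in> {..<m}" "l \<in> {..<m}" "k \<noteq> l"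
    hence "v k - v l \<in> A" unfolding A_def by auto
    have "\<psi> k s - \<psi> l s = - \<i> * complex_of_real (inner (v k - v l) (\<sigma> (t1 + s *\<^sub>R (t' - t1))))"
      for s unfolding \<psi>_def X_def rdot_cembed by (simp add: inner_diff_left algebra_simps)
    hence "\<psi> k 1 - \<psi> l 1 \<noteq> \<psi> k 0 - \<psi> l 0" using t' \<open>v k - v l \<in> A\<close> by simp
    thus "\<exists>s\<in>?I. \<psi> k s - \<psi> l s \<noteq> c"
      by (cases "\<psi> k 0 - \<psi> l 0 = c") (force, force)
  next
    show "\<forall>s\<in>?I. (\<Sum>k\<in>{..<m}. R k s * exp (\<psi> k s)) = 0"
    proof
      fix s assume "s \<in> ?I"
      hence "E_fun m v Pn Pd (X s) = 0" using van LU unfolding X_def by blast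
      thus "(\<Sum>k\<in>{..<m}. R k s * exp (\<psi> k s)) = 0" unfolding E_fun_def R_def \<psi>_def .
    qed
  qed simp_all
  hence "R k 0 = 0" using \<open>k < m\<close> by force
  thus ?thesis using Pd[of 0 k] \<open>k < m\<close> unfolding R_def X_def by simp
qed

lemma scaleR_eq_if_sigma_hat_eq:
  fixes \<sigma> :: "real^'m::finite \<Rightarrow> real^('m option)"
  assumes "\<sigma> t $ None \<noteq> 0" "y $ None \<noteq> 0" "(\<chi> i. y $ Some i / y $ None) = sigma_hat \<sigma> t"
  shows "y = (y $ None / \<sigma> t $ None) *\<^sub>R \<sigma> t"
proof (subst vec_eq_iff, rule allI)
  fix j :: "'m option"
  show "y $ j = ((y $ None / \<sigma> t $ None) *\<^sub>R \<sigma> t) $ j"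
  proof (cases j)
    case (Some i)
    have "y $ Some i / y $ None = \<sigma> t $ Some i / \<sigma> t $ None"
      using assms(3) unfolding sigma_hat_def vec_eq_iff by auto
    thus ?thesis using Some assms(1,2) by (simp add: field_simps)
  qed (use assms(1) in simp)
qed

lemma inner_point_condition_open_cone:
  fixes \<sigma> :: "real^'m::finite \<Rightarrow> real^('m option)"
  assumes "inner_point_condition \<sigma> U" "\<forall>t\<in>U. \<sigma> t $ None \<noteq> 0"
  obtains C y0 where "open C" "y0 \<in> C" "\<forall>y\<in>C. \<exists>c z. c \<noteq> 0 \<and> z \<in> \<sigma> ` U \<and> y = c *\<^sub>R z"
proof -
  obtain t0 where "t0 \<in> U" and t0: "sigma_hat \<sigma> t0 \<in> interior (sigma_hat \<sigma> ` U)"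
    using assms(1) unfolding inner_point_condition_def by blast
  define g where "g y = (\<chi> i. y $ Some i / y $ None)" for y :: "real^('m option)"
  define C where "C = {y. y $ None > 0} \<inter> g -` interior (sigma_hat \<sigma> ` U)"
  have "open C" unfolding C_def
  proof (rule continuous_open_preimage)
    show "continuous_on {y. y $ None > 0} g" unfolding g_def
      by (intro continuous_on_vec_lambda continuous_intros) auto
    show "open {y :: real^('m option). y $ None > 0}"
      by (rule open_Collect_less) (intro continuous_intros)+
  qed simp
  moreover have "(\<chi> j. case j of None \<Rightarrow> 1 | Some i \<Rightarrow> sigma_hat \<sigma> t0 $ i) \<in> C"
    unfolding C_def g_def using t0 by (simp add: vec_eq_iff)
  moreover have "\<exists>c z. c \<noteq> 0 \<and> z \<in> \<sigma> ` U \<and> y = c *\<^sub>R z" if "y \<in> C" for y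
  proof -
    obtain t where "t \<in> U" "g y = sigma_hat \<sigma> t"
      using \<open>y \<in> C\<close> interior_subset unfolding C_def by blast
    thus ?thesis
      using scaleR_eq_if_sigma_hat_eq[of \<sigma> t y] assms(2) \<open>y \<in> C\<close> unfolding C_def g_def
      by (intro exI[of _ "y $ None / \<sigma> t $ None"] exI[of _ "\<sigma> t"]) auto
  qed
  ultimately show ?thesis using that by blast
qed

lemma homogeneous_numerator_eq_0:
  fixes P Q :: "complex^'n::finite \<Rightarrow> complex"
  assumes "polyfun P" "polyfun Q" "\<exists>x. Q x \<noteq> 0"
    and hom: "\<forall>x (c::real). c \<noteq> 0 \<and> Q x \<noteq> 0 \<and> Q (c *\<^sub>R x) \<noteq> 0 \<longrightarrow>
                P (c *\<^sub>R x) / Q (c *\<^sub>R x) = complex_of_real c powi d * (P x / Q x)"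
    and "open C" "y0 \<in> C" and cone: "\<forall>y\<in>C. \<exists>c z. c \<noteq> 0 \<and> z \<in> Z \<and> y = c *\<^sub>R z"
    and Z: "\<forall>z\<in>Z. Q (cembed z) \<noteq> 0 \<and> P (cembed z) = 0"
  shows "P x = 0"
proof -
  have "P (cembed y) * Q (cembed y) = 0" if "y \<in> C" for y
  proof (cases "Q (cembed y) = 0")
    case False
    obtain c z where "c \<noteq> 0" "y = c *\<^sub>R z" "Q (cembed z) \<noteq> 0" "P (cembed z) = 0"
      using cone Z \<open>y \<in> C\<close> by blast
    moreover from this False have "Q (c *\<^sub>R cembed z) \<noteq> 0" by (simp add: cembed_scaleR)
    ultimately have "P (c *\<^sub>R cembed z) / Q (c *\<^sub>R cembed z) = 0"
      using hom by simp
    thus ?thesis using \<open>y = c *\<^sub>R z\<close> by (simp add: cembed_scaleR)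
  qed simp
  moreover have "poly_on_lines (\<lambda>y. P (cembed y) * Q (cembed y))"
    by (intro poly_on_lines_mult polyfun_cembed_poly_on_lines assms(1,2))
  ultimately have "\<forall>y. P (cembed y) * Q (cembed y) = 0"
    using poly_on_lines_eq_0_on_open[OF _ assms(5,6)] by blast
  hence "(\<forall>y. P (cembed y) = 0) \<or> (\<forall>y. Q (cembed y) = 0)"
    using assms(1,2) by (intro poly_on_lines_mult_eq_0 polyfun_cembed_poly_on_lines)
  moreover have "\<not> (\<forall>y. Q (cembed y) = 0)"
    using polyfun_eq_0_if_real_eq_0[OF assms(2)] assms(3) by blast
  ultimately show ?thesis using polyfun_eq_0_if_real_eq_0[OF assms(1)] by blast
qed

theorem theorem5:
  fixes \<sigma> :: "real^'m::finite \<Rightarrow> real^('m option)"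
    and D U :: "(real^'m) set"
    and d :: int and m :: nat and v :: "nat \<Rightarrow> real^('m option)"
    and Pn Pd :: "nat \<Rightarrow> complex^('m option) \<Rightarrow> complex"
  assumes "rp_param \<sigma> D"
    and "open U" and "U \<subseteq> D" and "\<forall>t\<in>U. \<sigma> t $ None \<noteq> 0"
    and "hyperplane_condition \<sigma> U"
    and "inner_point_condition \<sigma> U"
    and "is_E_function d m v Pn Pd"
    and "\<forall>t\<in>U. E_defined m Pd (cembed (\<sigma> t)) \<and> E_fun m v Pn Pd (cembed (\<sigma> t)) = 0"
  shows "\<forall>x. E_defined m Pd x \<longrightarrow> E_fun m v Pn Pd x = 0"
proof -
  have E: "inj_on v {..<m}" "\<forall>k<m. polyfun (Pn k) \<and> polyfun (Pd k)"
    using assms(7) unfolding is_E_function_def by auto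
  obtain C y0 where C: "open C" "y0 \<in> C" "\<forall>y\<in>C. \<exists>c z. c \<noteq> 0 \<and> z \<in> \<sigma> ` U \<and> y = c *\<^sub>R z"
    using inner_point_condition_open_cone[OF assms(6,4)] by blast
  have "Pn k x = 0" if "k < m" for k x
  proof (rule homogeneous_numerator_eq_0[OF _ _ _ _ C])
    show "polyfun (Pn k)" "polyfun (Pd k)" "\<exists>x. Pd k x \<noteq> 0"
      "\<forall>x (c::real). c \<noteq> 0 \<and> Pd k x \<noteq> 0 \<and> Pd k (c *\<^sub>R x) \<noteq> 0 \<longrightarrow>
         Pn k (c *\<^sub>R x) / Pd k (c *\<^sub>R x) = complex_of_real c powi d * (Pn k x / Pd k x)"
      using assms(7) that unfolding is_E_function_def by blast+
    show "\<forall>z\<in>\<sigma> ` U. Pd k (cembed z) \<noteq> 0 \<and> Pn k (cembed z) = 0"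
      using assms(8) that E_fun_numerator_eq_0_on_surface[OF assms(1,2,3,5) E assms(8) _ that]
      unfolding E_defined_def by blast
  qed
  thus ?thesis unfolding E_fun_def by simp
qed

end
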